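(* In the setting described in the context, suppose $T$ and $A$ are irreducible. Then for $0<y<r_A$ and $\nu=0,1,\dots,\tau-1$, \[ \delta(\Gamma_A^*(y\omega_\tau^\nu))=\delta(\Gamma_A^*(y)),\qquad \mu(y\omega_\tau^\nu)=\mu(y)\Delta_M(\omega_\tau^\nu)^{-1},\qquad v(y\omega_\tau^\nu)=\Delta_M(\omega_\tau^\nu)v(y). \]
   Context: Let $M_0,M$ be positive integers. Consider a discrete-time Markov chain of M/G/1 type with state space $\{(0,j):1\le j\le M_0\}\cup\{(k,j):k\ge1,1\le j\le M\}$ and transition matrix in lexicographic order \[ T=\begin{pmatrix}B(0)&B(1)&B(2)&\cdots\\ C(0)&A(1)&A(2)&\cdots\\ O&A(0)&A(1)&\cdots\\ O&O&A(0)&\cdots\\ \vdots&\vdots&\vdots&\ddots\end{pmatrix}, \] with nonnegative blocks $A(k)$ ($M\times M$), $B(0)$, $B(k)$, $C(0)$ of compatible sizes, $A=\sum_{k\ge0}A(k)$ stochastic, $B(0)e+\sum_{k\ge1}B(k)e=e$. $A^*(z)=\sum_{k\ge0}z^kA(k)$ has convergence radius $r_A$; $\Gamma_A^*(z)=z^{-1}A^*(z)$. For a square complex matrix $X$, $\delta(X)$ is a maximum-modulus eigenvalue with nonnegative argument and maximal real part among maximum-modulus eigenvalues. Period $\tau$: in the Markov additive process on $\mathbb Z\times\{1,\dots,M\}$ moving from $(k_0,i)$ to $(k_0+k,j)$ with probability $[\Gamma_A(k)]_{i,j}$, where $\Gamma_A(k)=A(k+1)$ ($k\ge-1$), $O$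 ($k\le-2$), $\tau$ is the common value of $\gcd\{k\ne0:(0,j)\to(k,j)\}$ ($\to$ = reachable with positive probability in $\ge1$ steps). Fix $p:\{1,\dots,M\}\to\{0,\dots,\tau-1\}$ with $[\Gamma_A(k)]_{i,j}>0$ only if $k\equiv p(j)-p(i)\pmod\tau$, and set $\Delta_M(z)=\mathrm{diag}(z^{-p(1)},\dots,z^{-p(M)})$. For $z\in\mathbb C$, $\mu(z)$ and $v(z)$ denote left and right eigenvectors of $\Gamma_A^*(z)$ for the eigenvalue $\delta(\Gamma_A^*(z))$, normalized by $\mu(z)\Delta_M(z/|z|)e=1$ and $\mu(z)v(z)=1$. $\omega_\tau=\exp(2\pi\iota/\tau)$. *)

theory Defs
  imports "HOL-Analysis.Analysis"
begin

(* Conventions: phases are 0-based; an M x M matrix is a function nat => nat => _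
   whose entries with indices < M are meaningful.  A k i j = [A(k)]_{i,j};
   B k i j = [B(k)]_{i,j} (B 0 is M0 x M0, B k for k >= 1 is M0 x M); C0 i j = [C(0)]_{i,j}. *)

definition inS :: "nat \<Rightarrow> nat \<Rightarrow> nat \<times> nat \<Rightarrow> bool" where
  "inS M0 M s = (case s of (l, j) \<Rightarrow> (l = 0 \<and> j < M0) \<or> (l \<ge> 1 \<and> j < M))"

definition Tent :: "(nat \<Rightarrow> nat \<Rightarrow> nat \<Rightarrow> real) \<Rightarrow> (nat \<Rightarrow> nat \<Rightarrow> nat \<Rightarrow> real)
    \<Rightarrow> (nat \<Rightarrow> nat \<Rightarrow> real) \<Rightarrow> nat \<times> nat \<Rightarrow> nat \<times> nat \<Rightarrow> real" where
  "Tent A B C0 s s' = (case (s, s') of ((l, i), (l', j)) \<Rightarrow>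
     if l = 0 then B l' i j
     else if l' = 0 then (if l = 1 then C0 i j else 0)
     else if l \<le> l' + 1 then A (l' + 1 - l) i j else 0)"

definition Tstep :: "nat \<Rightarrow> nat \<Rightarrow> (nat \<Rightarrow> nat \<Rightarrow> nat \<Rightarrow> real) \<Rightarrow> (nat \<Rightarrow> nat \<Rightarrow> nat \<Rightarrow> real)
    \<Rightarrow> (nat \<Rightarrow> nat \<Rightarrow> real) \<Rightarrow> nat \<times> nat \<Rightarrow> nat \<times> nat \<Rightarrow> bool" where
  "Tstep M0 M A B C0 s s' = (inS M0 M s \<and> inS M0 M s' \<and> Tent A B C0 s s' > 0)"

definition T_irreducible :: "nat \<Rightarrow> nat \<Rightarrow> (nat \<Rightarrow> nat \<Rightarrow> nat \<Rightarrow> real) \<Rightarrow> (nat \<Rightarrow> nat \<Rightarrow> nat \<Rightarrow> real)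
    \<Rightarrow> (nat \<Rightarrow> nat \<Rightarrow> real) \<Rightarrow> bool" where
  "T_irreducible M0 M A B C0 =
     (\<forall>s s'. inS M0 M s \<longrightarrow> inS M0 M s' \<longrightarrow> (Tstep M0 M A B C0)\<^sup>*\<^sup>* s s')"

definition Asum :: "(nat \<Rightarrow> nat \<Rightarrow> nat \<Rightarrow> real) \<Rightarrow> nat \<Rightarrow> nat \<Rightarrow> real" where
  "Asum A i j = (\<Sum>k. A k i j)"

definition matrix_irreducible :: "nat \<Rightarrow> (nat \<Rightarrow> nat \<Rightarrow> real) \<Rightarrow> bool" where
  "matrix_irreducible M X =
     (\<forall>i j. i < M \<longrightarrow> j < M \<longrightarrow> (\<lambda>a b. a < M \<and> b < M \<and> X a b > 0)\<^sup>*\<^sup>* i j)"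

definition rA :: "nat \<Rightarrow> (nat \<Rightarrow> nat \<Rightarrow> nat \<Rightarrow> real) \<Rightarrow> ereal" where
  "rA M A = (INF ij \<in> {..<M} \<times> {..<M}. conv_radius (\<lambda>k. A k (fst ij) (snd ij)))"

definition GammaA :: "(nat \<Rightarrow> nat \<Rightarrow> nat \<Rightarrow> real) \<Rightarrow> complex \<Rightarrow> nat \<Rightarrow> nat \<Rightarrow> complex" where
  "GammaA A z i j = (\<Sum>k. z ^ k * complex_of_real (A k i j)) / z"

text \<open>Transition (k0,i) -> (k1,j) of the MAP has probability [Gamma_A(k1-k0)]_{ij},
  Gamma_A(k) = A(k+1) for k >= -1 and O for k <= -2.\<close>
definition MAPstep :: "nat \<Rightarrow> (nat \<Rightarrow> nat \<Rightarrow> nat \<Rightarrow> real) \<Rightarrow> int \<times> nat \<Rightarrow> int \<times> nat \<Rightarrow> bool" where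
  "MAPstep M A s s' = (case (s, s') of ((k0, i), (k1, j)) \<Rightarrow>
     i < M \<and> j < M \<and> k1 - k0 \<ge> -1 \<and> A (nat (k1 - k0 + 1)) i j > 0)"

definition MAP_period_at :: "nat \<Rightarrow> (nat \<Rightarrow> nat \<Rightarrow> nat \<Rightarrow> real) \<Rightarrow> nat \<Rightarrow> nat" where
  "MAP_period_at M A j = nat (Gcd {k :: int. k \<noteq> 0 \<and> (MAPstep M A)\<^sup>+\<^sup>+ (0, j) (k, j)})"

text \<open>tau: the common value over all phases; we take it at phase 0.\<close>
definition MAP_period :: "nat \<Rightarrow> (nat \<Rightarrow> nat \<Rightarrow> nat \<Rightarrow> real) \<Rightarrow> nat" where
  "MAP_period M A = MAP_period_at M A 0"

definition is_eigenvalue :: "nat \<Rightarrow> (nat \<Rightarrow> nat \<Rightarrow> complex) \<Rightarrow> complex \<Rightarrow> bool" where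
  "is_eigenvalue M X lam =
     (\<exists>v. (\<exists>i<M. v i \<noteq> 0) \<and> (\<forall>i<M. (\<Sum>j<M. X i j * v j) = lam * v i))"

definition delta :: "nat \<Rightarrow> (nat \<Rightarrow> nat \<Rightarrow> complex) \<Rightarrow> complex" where
  "delta M X = (THE lam. is_eigenvalue M X lam
      \<and> (\<forall>m. is_eigenvalue M X m \<longrightarrow> cmod m \<le> cmod lam)
      \<and> Arg lam \<ge> 0
      \<and> (\<forall>m. is_eigenvalue M X m \<longrightarrow> cmod m = cmod lam \<longrightarrow> Re m \<le> Re lam))"

definition is_left_eigvec :: "nat \<Rightarrow> (nat \<Rightarrow> nat \<Rightarrow> complex) \<Rightarrow> complex \<Rightarrow> (nat \<Rightarrow> complex) \<Rightarrow> bool" where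
  "is_left_eigvec M X lam u = ((\<exists>i<M. u i \<noteq> 0) \<and> (\<forall>j<M. (\<Sum>i<M. u i * X i j) = lam * u j))"

definition is_right_eigvec :: "nat \<Rightarrow> (nat \<Rightarrow> nat \<Rightarrow> complex) \<Rightarrow> complex \<Rightarrow> (nat \<Rightarrow> complex) \<Rightarrow> bool" where
  "is_right_eigvec M X lam w = ((\<exists>i<M. w i \<noteq> 0) \<and> (\<forall>i<M. (\<Sum>j<M. X i j * w j) = lam * w i))"

text \<open>Delta_M(w) = diag(w^{-p(1)}, ..., w^{-p(M)}); entry i of the diagonal.\<close>
definition DeltaM :: "(nat \<Rightarrow> nat) \<Rightarrow> complex \<Rightarrow> nat \<Rightarrow> complex" where
  "DeltaM p w i = inverse (w ^ p i)"

definition mu :: "nat \<Rightarrow> (nat \<Rightarrow> nat \<Rightarrow> nat \<Rightarrow> real) \<Rightarrow> (nat \<Rightarrow> nat) \<Rightarrow> complex \<Rightarrow> nat \<Rightarrow> complex" where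
  "mu M A p z = (THE u. (\<forall>i\<ge>M. u i = 0)
      \<and> is_left_eigvec M (GammaA A z) (delta M (GammaA A z)) u
      \<and> (\<Sum>i<M. u i * DeltaM p (z / complex_of_real (cmod z)) i) = 1)"

definition vv :: "nat \<Rightarrow> (nat \<Rightarrow> nat \<Rightarrow> nat \<Rightarrow> real) \<Rightarrow> (nat \<Rightarrow> nat) \<Rightarrow> complex \<Rightarrow> nat \<Rightarrow> complex" where
  "vv M A p z = (THE w. (\<forall>i\<ge>M. w i = 0)
      \<and> is_right_eigvec M (GammaA A z) (delta M (GammaA A z)) w
      \<and> (\<Sum>i<M. mu M A p z i * w i) = 1)"

definition omega :: "nat \<Rightarrow> complex" where
  "omega tau = exp (2 * of_real pi * \<i> / of_nat tau)"

end

theory Submission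
  imports Defs "Jordan_Normal_Form.Spectral_Radius"
begin

unbundle no vec_syntax  \<comment> \<open>frees \<open>$\<close> for the vectors of \<open>Jordan_Normal_Form\<close>\<close>

text \<open>For real \<open>0 < y < r\<^sub>A\<close> the matrix \<open>\<Gamma>\<^sub>A\<^sup>*(y)\<close> is nonnegative and irreducible, so by
  Perron--Frobenius its eigenspaces for \<open>\<delta>\<close> are lines spanned by positive vectors; this makes
  \<open>\<mu>(y)\<close> and \<open>v(y)\<close> well defined. By the choice of \<open>p\<close>, \<open>[A(k)]\<^sub>i\<^sub>j > 0\<close> forces
  \<open>k - 1 \<equiv> p(j) - p(i) (mod \<tau>)\<close>, so rotating \<open>y\<close> by a \<open>\<tau>\<close>-th root of unity \<open>w\<close> multiplies
  entry \<open>(i,j)\<close> by \<open>w\<^bsup>p(j) - p(i)\<^esup>\<close>: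
  \<open>\<Gamma>\<^sub>A\<^sup>*(y w) = \<Delta>\<^sub>M(w) \<Gamma>\<^sub>A\<^sup>*(y) \<Delta>\<^sub>M(w)\<^sup>-\<^sup>1\<close>. A diagonal similarity preserves the spectrum,
  hence \<open>\<delta>\<close>, and carries eigenvectors to eigenvectors; the normalisations of \<open>\<mu>\<close> and \<open>v\<close> are
  transported along with them, and uniqueness identifies the results.\<close>

section \<open>Matrices as functions and the spectral radius\<close>

definition mat_of_fun :: "nat \<Rightarrow> (nat \<Rightarrow> nat \<Rightarrow> complex) \<Rightarrow> complex mat" where
  "mat_of_fun M X = mat M M (\<lambda>(i, j). X i j)"

primrec fmat_pow :: "nat \<Rightarrow> (nat \<Rightarrow> nat \<Rightarrow> 'a::comm_semiring_1) \<Rightarrow> nat \<Rightarrow> nat \<Rightarrow> nat \<Rightarrow> 'a" where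
  "fmat_pow M X 0 i j = (if i = j then 1 else 0)"
| "fmat_pow M X (Suc k) i j = (\<Sum>l<M. fmat_pow M X k i l * X l j)"

lemma mat_of_fun_carrier: "mat_of_fun M X \<in> carrier_mat M M"
  by (simp add: mat_of_fun_def)

lemma mat_of_fun_pow:
  "i < M \<Longrightarrow> j < M \<Longrightarrow> (mat_of_fun M X ^\<^sub>m k) $$ (i, j) = fmat_pow M X k i j"
proof (induction k arbitrary: j)
  case 0
  then show ?case by (simp add: mat_of_fun_def)
next
  case (Suc k)
  have "(mat_of_fun M X ^\<^sub>m Suc k) $$ (i, j) = scalar_prod (Matrix.row (mat_of_fun M X ^\<^sub>m k) i) (col (mat_of_fun M X) j)"
    using Suc.prems by (simp add: mat_of_fun_def)
  also have "\<dots> = (\<Sum>l<M. fmat_pow M X k i l * X l j)"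
    unfolding scalar_prod_def using Suc
    by (auto simp: mat_of_fun_def atLeast0LessThan intro!: sum.cong)
  finally show ?case by simp
qed

lemma eigenvalue_mat_of_fun_iff: "eigenvalue (mat_of_fun M X) lam \<longleftrightarrow> is_eigenvalue M X lam"
proof
  assume "eigenvalue (mat_of_fun M X) lam"
  then obtain v where v: "v \<in> carrier_vec M" "v \<noteq> 0\<^sub>v M" "mat_of_fun M X *\<^sub>v v = lam \<cdot>\<^sub>v v"
    unfolding eigenvalue_def eigenvector_def by (auto simp: mat_of_fun_def)
  from v(1,2) obtain i where "i < M" "v $ i \<noteq> 0"
    by (metis carrier_vecD eq_vecI index_zero_vec)
  moreover have "(\<Sum>j<M. X i j * v $ j) = lam * v $ i" if "i < M" for i
  proof -
    have "(mat_of_fun M X *\<^sub>v v) $ i = (lam \<cdot>\<^sub>v v) $ i" using v(3) by simp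
    then show ?thesis using that v(1) by (simp add: mat_of_fun_def scalar_prod_def atLeast0LessThan)
  qed
  ultimately show "is_eigenvalue M X lam"
    unfolding is_eigenvalue_def by (intro exI[of _ "\<lambda>i. v $ i"]) auto
next
  assume "is_eigenvalue M X lam"
  then obtain v where v: "\<exists>i<M. v i \<noteq> 0" "\<forall>i<M. (\<Sum>j<M. X i j * v j) = lam * v i"
    unfolding is_eigenvalue_def by auto
  show "eigenvalue (mat_of_fun M X) lam"
    unfolding eigenvalue_def eigenvector_def
    using v by (intro exI[of _ "vec M v"])
      (auto simp: mat_of_fun_def scalar_prod_def atLeast0LessThan vec_eq_iff)
qed

lemma max_modulus_eigenvalue_exists:
  assumes "M > 0"
  shows "\<exists>lam0. is_eigenvalue M X lam0 \<and> (\<forall>lam. is_eigenvalue M X lam \<longrightarrow> cmod lam \<le> cmod lam0)"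
proof -
  obtain lam0 where lam0: "eigenvalue (mat_of_fun M X) lam0"
    "spectral_radius (mat_of_fun M X) = cmod lam0"
    using spectral_radius_mem_max(1)[OF mat_of_fun_carrier assms] unfolding spectrum_def by auto
  have "cmod lam \<le> cmod lam0" if "is_eigenvalue M X lam" for lam
  proof -
    have "cmod lam \<in> cmod ` spectrum (mat_of_fun M X)"
      using that by (simp add: spectrum_def eigenvalue_mat_of_fun_iff)
    then show ?thesis using spectral_radius_mem_max(2)[OF mat_of_fun_carrier[of M X] assms] lam0(2) by simp
  qed
  then show ?thesis using lam0(1) eigenvalue_mat_of_fun_iff by blast
qed

lemma fmat_pow_bounded_if_eigenvalues_in_unit_disc:
  assumes "M > 0" and "\<And>lam. is_eigenvalue M X lam \<Longrightarrow> cmod lam < 1"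
  shows "\<exists>c. \<forall>k i j. i < M \<longrightarrow> j < M \<longrightarrow> cmod (fmat_pow M X k i j) \<le> c"
proof -
  obtain lam0 where lam0: "eigenvalue (mat_of_fun M X) lam0"
    "spectral_radius (mat_of_fun M X) = cmod lam0"
    using spectral_radius_mem_max(1)[OF mat_of_fun_carrier assms(1)] unfolding spectrum_def by auto
  then have "spectral_radius (mat_of_fun M X) < 1"
    using assms(2) eigenvalue_mat_of_fun_iff by auto
  from spectral_radius_jnf_norm_bound_less_1_upper_triangular[OF mat_of_fun_carrier this]
  obtain c where c: "\<And>k. norm_bound (mat_of_fun M X ^\<^sub>m k) c" by auto
  have "cmod (fmat_pow M X k i j) \<le> c" if "i < M" "j < M" for k i j
    using c[of k] that mat_of_fun_carrier[of M X]
    unfolding norm_bound_def mat_of_fun_pow[OF that, symmetric] by auto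
  then show ?thesis by blast
qed

lemma fmat_pow_scale:
  fixes R :: "nat \<Rightarrow> nat \<Rightarrow> real"
  assumes "s \<noteq> 0"
  shows "complex_of_real (fmat_pow M R k i j)
    = of_real s ^ k * fmat_pow M (\<lambda>i j. of_real (R i j) / of_real s) k i j"
proof (induction k arbitrary: j)
  case (Suc k)
  have "complex_of_real (fmat_pow M R (Suc k) i j)
      = (\<Sum>l<M. of_real s ^ Suc k * (fmat_pow M (\<lambda>i j. of_real (R i j) / of_real s) k i l
          * (of_real (R l j) / of_real s)))"
    using Suc.IH assms by (auto simp: field_simps intro!: sum.cong)
  then show ?case by (simp add: sum_distrib_left)
qed simp

lemma is_eigenvalue_divide:
  assumes "s \<noteq> 0" and "is_eigenvalue M (\<lambda>i j. X i j / s) lam"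
  shows "is_eigenvalue M X (s * lam)"
proof -
  obtain v where v: "\<exists>i<M. v i \<noteq> 0" "\<forall>i<M. (\<Sum>j<M. X i j / s * v j) = lam * v i"
    using assms(2) unfolding is_eigenvalue_def by blast
  have "(\<Sum>j<M. X i j * v j) = s * lam * v i" if "i < M" for i
  proof -
    have "(\<Sum>j<M. X i j * v j) = s * (\<Sum>j<M. X i j / s * v j)"
      using assms(1) by (simp add: sum_distrib_left)
    then show ?thesis using v(2) that by simp
  qed
  then show ?thesis using v(1) unfolding is_eigenvalue_def by blast
qed

lemma fmat_pow_growth_bound:
  fixes R :: "nat \<Rightarrow> nat \<Rightarrow> real"
  assumes M: "M > 0" and s: "s > 0"
    and small: "\<And>lam. is_eigenvalue M (\<lambda>i j. of_real (R i j)) lam \<Longrightarrow> cmod lam < s"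
  shows "\<exists>c. \<forall>k i j. i < M \<longrightarrow> j < M \<longrightarrow> \<bar>fmat_pow M R k i j\<bar> \<le> s ^ k * c"
proof -
  define X where "X = (\<lambda>i j. complex_of_real (R i j) / of_real s)"
  have "cmod lam < 1" if "is_eigenvalue M X lam" for lam
  proof -
    have "cmod (of_real s * lam) < s"
      using is_eigenvalue_divide[of "of_real s"] that s small by (simp add: X_def)
    then show ?thesis using s by (simp add: norm_mult)
  qed
  then obtain c where c: "\<And>k i j. i < M \<Longrightarrow> j < M \<Longrightarrow> cmod (fmat_pow M X k i j) \<le> c"
    using fmat_pow_bounded_if_eigenvalues_in_unit_disc[OF M] by blast
  have "\<bar>fmat_pow M R k i j\<bar> \<le> s ^ k * c" if "i < M" "j < M" for k i j
  proof -
    have "\<bar>fmat_pow M R k i j\<bar> = s ^ k * cmod (fmat_pow M X k i j)"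
      using arg_cong[OF fmat_pow_scale[of s M R k i j], of cmod] s
      by (simp add: X_def norm_mult norm_power)
    also have "\<dots> \<le> s ^ k * c" using c[OF that] s by (intro mult_left_mono) auto
    finally show ?thesis .
  qed
  then show ?thesis by blast
qed

section \<open>Perron--Frobenius theory of irreducible nonnegative matrices\<close>

definition fmat_vec :: "nat \<Rightarrow> (nat \<Rightarrow> nat \<Rightarrow> real) \<Rightarrow> (nat \<Rightarrow> real) \<Rightarrow> nat \<Rightarrow> real" where
  "fmat_vec M R x i = (\<Sum>j<M. R i j * x j)"

definition nonneg_mat :: "nat \<Rightarrow> (nat \<Rightarrow> nat \<Rightarrow> real) \<Rightarrow> bool" where
  "nonneg_mat M R \<longleftrightarrow> (\<forall>i j. i < M \<longrightarrow> j < M \<longrightarrow> 0 \<le> R i j)"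

abbreviation support_rel :: "nat \<Rightarrow> (nat \<Rightarrow> nat \<Rightarrow> real) \<Rightarrow> nat \<Rightarrow> nat \<Rightarrow> bool" where
  "support_rel M R a b \<equiv> a < M \<and> b < M \<and> 0 < R a b"

lemma fmat_pow_nonneg: "nonneg_mat M R \<Longrightarrow> j < M \<Longrightarrow> 0 \<le> fmat_pow M R k i j"
  by (induction k arbitrary: j) (auto simp: nonneg_mat_def intro!: sum_nonneg)

lemma fmat_vec_fmat_pow_0:
  assumes "i < M"
  shows "fmat_vec M (fmat_pow M R 0) x i = x i"
proof -
  have "fmat_vec M (fmat_pow M R 0) x i = (\<Sum>j<M. if i = j then x i else 0)"
    unfolding fmat_vec_def by (rule sum.cong) auto
  then show ?thesis using assms by simp
qed

lemma fmat_vec_fmat_pow_Suc: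
  "fmat_vec M (fmat_pow M R (Suc k)) x i = fmat_vec M (fmat_pow M R k) (fmat_vec M R x) i"
proof -
  have "fmat_vec M (fmat_pow M R (Suc k)) x i = (\<Sum>j<M. \<Sum>l<M. fmat_pow M R k i l * R l j * x j)"
    by (simp add: fmat_vec_def sum_distrib_right)
  also have "\<dots> = (\<Sum>l<M. \<Sum>j<M. fmat_pow M R k i l * R l j * x j)" by (rule sum.swap)
  finally show ?thesis by (simp add: fmat_vec_def sum_distrib_left mult.assoc)
qed

lemma fmat_vec_mono:
  "nonneg_mat M R \<Longrightarrow> i < M \<Longrightarrow> (\<And>j. j < M \<Longrightarrow> x j \<le> y j) \<Longrightarrow> fmat_vec M R x i \<le> fmat_vec M R y i"
  unfolding fmat_vec_def nonneg_mat_def by (auto intro!: sum_mono mult_left_mono)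

lemma fmat_vec_iter_nonneg:
  "nonneg_mat M R \<Longrightarrow> (\<And>j. j < M \<Longrightarrow> 0 \<le> x j) \<Longrightarrow> i < M \<Longrightarrow> 0 \<le> (fmat_vec M R ^^ k) x i"
  by (induction k arbitrary: i) (auto simp: fmat_vec_def nonneg_mat_def intro!: sum_nonneg)

lemma fmat_vec_iter_pos:
  assumes nonneg: "nonneg_mat M R" and x: "\<And>j. j < M \<Longrightarrow> 0 \<le> x j" and "0 < x j"
  shows "(support_rel M R ^^ k) i j \<Longrightarrow> 0 < (fmat_vec M R ^^ k) x i"
proof (induction k arbitrary: i)
  case 0
  then show ?case using \<open>0 < x j\<close> by simp
next
  case (Suc k)
  obtain a where ia: "support_rel M R i a" and "(support_rel M R ^^ k) a j"
    using relpowp_Suc_D2[OF Suc.prems] by blast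
  then have "0 < R i a * (fmat_vec M R ^^ k) x a" using Suc.IH by simp
  also have "\<dots> \<le> (\<Sum>l<M. R i l * (fmat_vec M R ^^ k) x l)"
    using ia nonneg fmat_vec_iter_nonneg[OF nonneg x]
    by (intro member_le_sum) (auto simp: nonneg_mat_def)
  finally show ?case by (simp only: funpow.simps comp_apply fmat_vec_def[of M R "(fmat_vec M R ^^ k) x"])
qed

lemma fmat_vec_diff:
  "fmat_vec M R x i - r * fmat_vec M R y i = fmat_vec M R (\<lambda>j. x j - r * y j) i"
  by (simp add: fmat_vec_def sum_subtractf sum_distrib_left algebra_simps)

lemma fmat_vec_iter_Suc_diff:
  "(fmat_vec M R ^^ Suc k) x i - r * (fmat_vec M R ^^ k) x i
    = (fmat_vec M R ^^ k) (\<lambda>i. fmat_vec M R x i - r * x i) i"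
proof (induction k arbitrary: i)
  case (Suc k)
  have "(fmat_vec M R ^^ Suc (Suc k)) x i - r * (fmat_vec M R ^^ Suc k) x i
      = fmat_vec M R (\<lambda>l. (fmat_vec M R ^^ Suc k) x l - r * (fmat_vec M R ^^ k) x l) i"
    by (simp add: fmat_vec_diff)
  also have "(\<lambda>l. (fmat_vec M R ^^ Suc k) x l - r * (fmat_vec M R ^^ k) x l)
      = (fmat_vec M R ^^ k) (\<lambda>i. fmat_vec M R x i - r * x i)"
    using Suc.IH by blast
  finally show ?case by simp
qed simp

text \<open>\<open>R\<^sub>a\<^sub>b > 0\<close> and \<open>(R x)\<^sub>a = r x\<^sub>a = 0\<close> force \<open>x\<^sub>b = 0\<close>; irreducibility reaches every \<open>b\<close>.\<close>
lemma nonneg_eigvec_vanishes: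
  assumes nonneg: "nonneg_mat M R" and irr: "matrix_irreducible M R"
    and x: "\<And>j. j < M \<Longrightarrow> 0 \<le> x j" and eig: "\<And>i. i < M \<Longrightarrow> fmat_vec M R x i = r * x i"
    and "k < M" "x k = 0" and "j < M"
  shows "x j = 0"
proof -
  have "(support_rel M R)\<^sup>*\<^sup>* k j"
    using irr \<open>k < M\<close> \<open>j < M\<close> by (auto simp: matrix_irreducible_def)
  then show ?thesis
  proof (induction rule: rtranclp_induct)
    case base
    show ?case by fact
  next
    case (step a b)
    have "(\<Sum>l<M. R a l * x l) = 0" using eig step by (simp add: fmat_vec_def)
    then have "\<forall>l\<in>{..<M}. R a l * x l = 0"
      using nonneg x step by (subst (asm) sum_nonneg_eq_0_iff) (auto simp: nonneg_mat_def)
    moreover have "b < M" "0 < R a b" using step(2) by simp_all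
    ultimately have "R a b * x b = 0" by blast
    with \<open>0 < R a b\<close> show ?case by simp
  qed
qed

lemma fmat_vec_fmat_pow_lower_bound:
  assumes nonneg: "nonneg_mat M R" and "0 \<le> q"
    and super: "\<And>i. i < M \<Longrightarrow> q * z i \<le> fmat_vec M R z i" and "i < M"
  shows "q ^ k * z i \<le> fmat_vec M (fmat_pow M R k) z i"
  using \<open>i < M\<close>
proof (induction k arbitrary: i)
  case 0
  then show ?case by (simp add: fmat_vec_fmat_pow_0 del: fmat_pow.simps)
next
  case (Suc k)
  have nonneg_pow: "nonneg_mat M (fmat_pow M R k)"
    using fmat_pow_nonneg[OF nonneg] by (auto simp: nonneg_mat_def)
  have "q ^ Suc k * z i = q * (q ^ k * z i)" by simp
  also have "\<dots> \<le> q * fmat_vec M (fmat_pow M R k) z i"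
    using Suc \<open>0 \<le> q\<close> by (intro mult_left_mono) auto
  also have "\<dots> = fmat_vec M (fmat_pow M R k) (\<lambda>j. q * z j) i"
    by (simp add: fmat_vec_def sum_distrib_left mult_ac)
  also have "\<dots> \<le> fmat_vec M (fmat_pow M R k) (fmat_vec M R z) i"
    using super by (intro fmat_vec_mono[OF nonneg_pow Suc.prems])
  finally show ?case unfolding fmat_vec_fmat_pow_Suc .
qed

text \<open>A positive vector with \<open>R z \<ge> q z\<close> makes \<open>R\<^sup>k z\<close> grow like \<open>q\<^sup>k\<close>, while
  \<open>R\<^sup>k = O(s\<^sup>k)\<close> for every \<open>s\<close> beyond the spectral radius.\<close>
lemma supervector_imp_large_eigenvalue:
  assumes M: "M > 0" and nonneg: "nonneg_mat M R" and "0 \<le> r" "r < q"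
    and pos: "\<And>i. i < M \<Longrightarrow> 0 < z i"
    and super: "\<And>i. i < M \<Longrightarrow> q * z i \<le> fmat_vec M R z i"
  shows "\<exists>lam. is_eigenvalue M (\<lambda>i j. of_real (R i j)) lam \<and> r < cmod lam"
proof (rule ccontr)
  assume no_large: "\<not> ?thesis"
  define s where "s = (r + q) / 2"
  have s: "0 < s" "s < q" using \<open>0 \<le> r\<close> \<open>r < q\<close> by (auto simp: s_def)
  have "cmod lam < s" if "is_eigenvalue M (\<lambda>i j. of_real (R i j)) lam" for lam
  proof -
    have "cmod lam \<le> r" using that no_large by (meson not_le)
    then show ?thesis using \<open>r < q\<close> by (simp add: s_def)
  qed
  then obtain c where c: "\<And>k i j. i < M \<Longrightarrow> j < M \<Longrightarrow> \<bar>fmat_pow M R k i j\<bar> \<le> s ^ k * c"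
    using fmat_pow_growth_bound[OF M \<open>0 < s\<close>] by blast
  define S where "S = (\<Sum>j<M. z j)"
  have upper: "fmat_vec M (fmat_pow M R k) z 0 \<le> s ^ k * (c * S)" for k
  proof -
    have "fmat_vec M (fmat_pow M R k) z 0 \<le> (\<Sum>j<M. s ^ k * c * z j)"
      unfolding fmat_vec_def
    proof (intro sum_mono)
      fix j assume "j \<in> {..<M}"
      then have "fmat_pow M R k 0 j * z j \<le> \<bar>fmat_pow M R k 0 j\<bar> * z j"
        "\<bar>fmat_pow M R k 0 j\<bar> * z j \<le> s ^ k * c * z j"
        using pos[of j] c[of 0 j k] M by (auto intro: mult_right_mono)
      then show "fmat_pow M R k 0 j * z j \<le> s ^ k * c * z j" by linarith
    qed
    then show ?thesis by (simp add: S_def sum_distrib_left mult_ac)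
  qed
  obtain n where n: "c * S / z 0 < (q / s) ^ n"
    using real_arch_pow[of "q / s"] s by auto
  have "q ^ n * z 0 \<le> s ^ n * (c * S)"
    using fmat_vec_fmat_pow_lower_bound[OF nonneg _ super M, of n] upper[of n] s by linarith
  then have "q ^ n * z 0 \<le> c * S * s ^ n" by (simp only: mult.commute[of "s ^ n"])
  then have "q ^ n * z 0 / s ^ n \<le> c * S"
    by (subst pos_divide_le_eq) (use s in simp_all)
  moreover have "c * S < q ^ n * z 0 / s ^ n"
    using n pos_divide_less_eq[OF pos[OF M]] by (simp add: power_divide)
  ultimately show False by linarith
qed

lemma fmat_vec_sum: "fmat_vec M R (\<lambda>j. \<Sum>k\<in>K. x k j) i = (\<Sum>k\<in>K. fmat_vec M R (x k) i)"
  unfolding fmat_vec_def by (simp add: sum_distrib_left) (rule sum.swap)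

lemma iter_sum_pos_if_irreducible:
  assumes nonneg: "nonneg_mat M R" and irr: "matrix_irreducible M R"
    and x: "\<And>j. j < M \<Longrightarrow> 0 \<le> x j" and "j < M" "0 < x j"
  obtains N where "\<And>n i. N \<le> n \<Longrightarrow> i < M \<Longrightarrow> 0 < (\<Sum>k<n. (fmat_vec M R ^^ k) x i)"
proof -
  have "\<forall>i\<in>{..<M}. \<exists>k. (support_rel M R ^^ k) i j"
    using irr \<open>j < M\<close> by (auto simp: matrix_irreducible_def rtranclp_power)
  from bchoice[OF this] obtain f where f: "\<forall>i\<in>{..<M}. (support_rel M R ^^ f i) i j"
    by blast
  define N where "N = Suc (Max (f ` {..<M}))"
  have "0 < (\<Sum>k<n. (fmat_vec M R ^^ k) x i)" if "N \<le> n" "i < M" for n i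
  proof (rule sum_pos2)
    have "f i \<le> Max (f ` {..<M})" using \<open>i < M\<close> by (simp add: Max_ge)
    then have "f i < n" using that(1) unfolding N_def by linarith
    then show "f i \<in> {..<n}" by simp
    from f \<open>i < M\<close> have "(support_rel M R ^^ f i) i j" by blast
    then show "0 < (fmat_vec M R ^^ f i) x i"
      using fmat_vec_iter_pos[where x=x, OF nonneg x \<open>0 < x j\<close>] by blast
  qed (use fmat_vec_iter_nonneg[OF nonneg x \<open>i < M\<close>] in auto)
  then show ?thesis using that by blast
qed

text \<open>If \<open>R z \<ge> r z\<close> with a strict inequality somewhere, then \<open>z' = \<Sum>\<^sub>k\<^sub><\<^sub>N R\<^sup>k z\<close>
  is positive and satisfies \<open>R z' - r z' = \<Sum>\<^sub>k\<^sub><\<^sub>N R\<^sup>k (R z - r z) > 0\<close> everywhere.\<close>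
lemma subinvariant_imp_supervector:
  assumes nonneg: "nonneg_mat M R" and irr: "matrix_irreducible M R" and M: "M > 0"
    and z: "\<And>j. j < M \<Longrightarrow> 0 \<le> z j" and "j0 < M" "0 < z j0"
    and sub: "\<And>i. i < M \<Longrightarrow> r * z i \<le> fmat_vec M R z i"
    and "i0 < M" "fmat_vec M R z i0 \<noteq> r * z i0"
  obtains z' e where "0 < e" "\<And>i. i < M \<Longrightarrow> 0 < z' i"
    "\<And>i. i < M \<Longrightarrow> (r + e) * z' i \<le> fmat_vec M R z' i"
proof -
  define d where "d = (\<lambda>i. fmat_vec M R z i - r * z i)"
  have d: "\<And>j. j < M \<Longrightarrow> 0 \<le> d j" "0 < d i0"
    using sub assms(8,9) by (force simp: d_def)+
  obtain N1 where N1: "\<And>n i. N1 \<le> n \<Longrightarrow> i < M \<Longrightarrow> 0 < (\<Sum>k<n. (fmat_vec M R ^^ k) z i)"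
    using iter_sum_pos_if_irreducible[where x=z, OF nonneg irr z \<open>j0 < M\<close> \<open>0 < z j0\<close>] by blast
  obtain N2 where N2: "\<And>n i. N2 \<le> n \<Longrightarrow> i < M \<Longrightarrow> 0 < (\<Sum>k<n. (fmat_vec M R ^^ k) d i)"
    using iter_sum_pos_if_irreducible[where x=d, OF nonneg irr d(1) \<open>i0 < M\<close> d(2)] by blast
  define N where "N = max N1 N2"
  define z' where "z' = (\<lambda>i. \<Sum>k<N. (fmat_vec M R ^^ k) z i)"
  have pos: "0 < z' i" if "i < M" for i
    using N1[of N i] that by (simp add: z'_def N_def)
  have excess: "0 < fmat_vec M R z' i - r * z' i" if "i < M" for i
  proof -
    have "fmat_vec M R z' i - r * z' i
        = (\<Sum>k<N. (fmat_vec M R ^^ Suc k) z i - r * (fmat_vec M R ^^ k) z i)"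
      by (simp add: z'_def fmat_vec_sum sum_subtractf sum_distrib_left)
    also have "\<dots> = (\<Sum>k<N. (fmat_vec M R ^^ k) d i)"
      by (simp only: d_def fmat_vec_iter_Suc_diff)
    also have "\<dots> > 0" using N2[of N i] that by (simp add: N_def)
    finally show ?thesis .
  qed
  define e where "e = Min ((\<lambda>i. (fmat_vec M R z' i - r * z' i) / z' i) ` {..<M})"
  have "0 < e" unfolding e_def using M excess pos by (subst Min_gr_iff) auto
  moreover have "(r + e) * z' i \<le> fmat_vec M R z' i" if "i < M" for i
  proof -
    have "e \<le> (fmat_vec M R z' i - r * z' i) / z' i"
      unfolding e_def using that by (intro Min_le) auto
    then show ?thesis using pos[OF that] by (simp add: field_simps)
  qed
  ultimately show ?thesis using that pos by blast
qed

text \<open>Take an eigenvalue \<open>\<lambda>\<^sub>0\<close> of maximal modulus \<open>r\<close> with eigenvector \<open>w\<close>; then \<open>R |w| \<ge> r |w|\<close>,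
  and equality must hold since otherwise there would be an eigenvalue of modulus \<open>> r\<close>.\<close>
lemma perron_eigenvector_exists:
  assumes nonneg: "nonneg_mat M R" and irr: "matrix_irreducible M R" and M: "M > 0"
  obtains r v where "0 \<le> r" "\<And>i. i < M \<Longrightarrow> 0 < v i" "\<And>i. i < M \<Longrightarrow> fmat_vec M R v i = r * v i"
    "\<And>lam. is_eigenvalue M (\<lambda>i j. of_real (R i j)) lam \<Longrightarrow> cmod lam \<le> r"
proof -
  define X where "X = (\<lambda>i j. complex_of_real (R i j))"
  obtain lam0 where "is_eigenvalue M X lam0"
    and max: "\<And>lam. is_eigenvalue M X lam \<Longrightarrow> cmod lam \<le> cmod lam0"
    using max_modulus_eigenvalue_exists[OF M] by blast
  then obtain w where "\<exists>i<M. w i \<noteq> 0" and w: "\<And>i. i < M \<Longrightarrow> (\<Sum>j<M. X i j * w j) = lam0 * w i"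
    unfolding is_eigenvalue_def by blast
  define r where "r = cmod lam0"
  define z where "z = (\<lambda>i. cmod (w i))"
  have z: "\<And>j. j < M \<Longrightarrow> 0 \<le> z j" by (simp add: z_def)
  obtain j0 where "j0 < M" "0 < z j0" using \<open>\<exists>i<M. w i \<noteq> 0\<close> by (auto simp: z_def)
  have sub: "r * z i \<le> fmat_vec M R z i" if "i < M" for i
  proof -
    have "r * z i = cmod (\<Sum>j<M. X i j * w j)" using w[OF that] by (simp add: r_def z_def norm_mult)
    also have "\<dots> \<le> (\<Sum>j<M. cmod (X i j * w j))" by (rule norm_sum)
    also have "\<dots> = fmat_vec M R z i" unfolding fmat_vec_def
      using nonneg that by (intro sum.cong) (auto simp: X_def z_def norm_mult nonneg_mat_def)
    finally show ?thesis .
  qed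
  have eig: "fmat_vec M R z i = r * z i" if i: "i < M" for i
  proof (rule ccontr)
    assume "fmat_vec M R z i \<noteq> r * z i"
    obtain z' e where z': "0 < e" "\<And>i. i < M \<Longrightarrow> 0 < z' i"
      "\<And>i. i < M \<Longrightarrow> (r + e) * z' i \<le> fmat_vec M R z' i"
      by (rule subinvariant_imp_supervector[where z=z,
            OF nonneg irr M z \<open>j0 < M\<close> \<open>0 < z j0\<close> sub i \<open>fmat_vec M R z i \<noteq> r * z i\<close>])
        blast+
    then obtain lam where lam: "is_eigenvalue M X lam" "r < cmod lam"
      using supervector_imp_large_eigenvalue[where z=z' and r=r and q="r + e", OF M nonneg] z'
      by (auto simp: X_def r_def)
    with max[OF lam(1)] show False by (simp add: r_def)
  qed
  have pos: "0 < z i" if "i < M" for i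
  proof (rule ccontr)
    assume "\<not> 0 < z i"
    then have "z i = 0" using z[OF that] by simp
    then have "z j0 = 0" using nonneg_eigvec_vanishes[OF nonneg irr z eig that] \<open>j0 < M\<close> by blast
    with \<open>0 < z j0\<close> show False by simp
  qed
  show ?thesis
    by (rule that[of r z]) (use eig pos max in \<open>simp_all add: X_def r_def\<close>)
qed

text \<open>With \<open>c = min\<^sub>i x\<^sub>i / v\<^sub>i\<close>, \<open>x - c v\<close> is a nonnegative eigenvector with a zero entry.\<close>
lemma real_eigvec_multiple_of_positive:
  assumes nonneg: "nonneg_mat M R" and irr: "matrix_irreducible M R"
    and pos: "\<And>i. i < M \<Longrightarrow> 0 < v i" and v: "\<And>i. i < M \<Longrightarrow> fmat_vec M R v i = r * v i"
    and x: "\<And>i. i < M \<Longrightarrow> fmat_vec M R x i = r * x i"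
  shows "\<exists>c. \<forall>i<M. x i = c * v i"
proof (cases "M = 0")
  case False
  define c where "c = Min ((\<lambda>i. x i / v i) ` {..<M})"
  have "c \<in> (\<lambda>i. x i / v i) ` {..<M}" unfolding c_def using False by (intro Min_in) auto
  then obtain k where k: "k < M" "x k / v k = c" by auto
  define y where "y = (\<lambda>i. x i - c * v i)"
  have y_nonneg: "0 \<le> y j" if "j < M" for j
  proof -
    have "c \<le> x j / v j" unfolding c_def using that by (intro Min_le) auto
    then show ?thesis using pos[OF that] by (simp add: y_def field_simps)
  qed
  have "y k = 0" using k pos[OF k(1)] by (simp add: y_def field_simps)
  have y: "fmat_vec M R y i = r * y i" if "i < M" for i
    using fmat_vec_diff[of M R x i c v] x[OF that] v[OF that] by (simp add: y_def algebra_simps)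
  have "y i = 0" if "i < M" for i
    using nonneg_eigvec_vanishes[OF nonneg irr y_nonneg y k(1) \<open>y k = 0\<close> that] .
  then show ?thesis by (auto simp: y_def)
qed simp

lemma complex_eigvec_multiple_of_positive:
  fixes w :: "nat \<Rightarrow> complex"
  assumes nonneg: "nonneg_mat M R" and irr: "matrix_irreducible M R"
    and pos: "\<And>i. i < M \<Longrightarrow> 0 < v i" and v: "\<And>i. i < M \<Longrightarrow> fmat_vec M R v i = r * v i"
    and w: "\<And>i. i < M \<Longrightarrow> (\<Sum>j<M. of_real (R i j) * w j) = of_real r * w i"
  shows "\<exists>c. \<forall>i<M. w i = c * of_real (v i)"
proof -
  have "fmat_vec M R (\<lambda>i. Re (w i)) i = r * Re (w i)"
    and "fmat_vec M R (\<lambda>i. Im (w i)) i = r * Im (w i)" if "i < M" for i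
    using arg_cong[OF w[OF that], of Re] arg_cong[OF w[OF that], of Im]
    by (simp_all add: fmat_vec_def Re_sum Im_sum)
  then obtain a b where "\<And>i. i < M \<Longrightarrow> Re (w i) = a * v i" "\<And>i. i < M \<Longrightarrow> Im (w i) = b * v i"
    using real_eigvec_multiple_of_positive[OF nonneg irr pos v] by metis
  then show ?thesis by (intro exI[of _ "Complex a b"]) (simp add: complex_eq_iff)
qed

lemma nonneg_mat_transpose: "nonneg_mat M R \<Longrightarrow> nonneg_mat M (\<lambda>i j. R j i)"
  by (auto simp: nonneg_mat_def)

lemma matrix_irreducible_transpose:
  assumes "matrix_irreducible M R"
  shows "matrix_irreducible M (\<lambda>i j. R j i)"
proof -
  have "(support_rel M (\<lambda>i j. R j i))\<^sup>*\<^sup>* b a" if "(support_rel M R)\<^sup>*\<^sup>* a b" for a b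
    using that by (induction rule: rtranclp_induct) (auto intro: converse_rtranclp_into_rtranclp)
  then show ?thesis using assms by (auto simp: matrix_irreducible_def)
qed

lemma is_left_eigvec_iff_transpose:
  "is_left_eigvec M X lam u \<longleftrightarrow> is_right_eigvec M (\<lambda>i j. X j i) lam u"
  by (simp add: is_left_eigvec_def is_right_eigvec_def mult.commute)

lemma is_eigenvalue_cong:
  assumes "\<And>i j. i < M \<Longrightarrow> j < M \<Longrightarrow> X i j = Y i j"
  shows "is_eigenvalue M X = is_eigenvalue M Y"
proof -
  have "(\<Sum>j<M. X i j * v j) = (\<Sum>j<M. Y i j * v j)" if "i < M" for i v
    using assms that by (intro sum.cong) auto
  then show ?thesis unfolding is_eigenvalue_def by (intro ext) simp
qed

lemma is_right_eigvec_iff_multiple_of_positive: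
  assumes nonneg: "nonneg_mat M R" and irr: "matrix_irreducible M R" and M: "M > 0"
    and X: "\<And>i j. i < M \<Longrightarrow> j < M \<Longrightarrow> X i j = of_real (R i j)"
    and pos: "\<And>i. i < M \<Longrightarrow> 0 < v i" and v: "\<And>i. i < M \<Longrightarrow> fmat_vec M R v i = r * v i"
  shows "is_right_eigvec M X (of_real r) w \<longleftrightarrow> (\<exists>a. a \<noteq> 0 \<and> (\<forall>i<M. w i = a * of_real (v i)))"
proof
  assume w: "is_right_eigvec M X (of_real r) w"
  have "(\<Sum>j<M. of_real (R i j) * w j) = of_real r * w i" if "i < M" for i
  proof -
    have "(\<Sum>j<M. X i j * w j) = (\<Sum>j<M. of_real (R i j) * w j)"
      using that by (intro sum.cong) (simp_all add: X)
    then show ?thesis using w that by (simp add: is_right_eigvec_def)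
  qed
  then obtain a where a: "\<forall>i<M. w i = a * of_real (v i)"
    using complex_eigvec_multiple_of_positive[OF nonneg irr pos v] by blast
  moreover have "a \<noteq> 0" using w a by (auto simp: is_right_eigvec_def)
  ultimately show "\<exists>a. a \<noteq> 0 \<and> (\<forall>i<M. w i = a * of_real (v i))" by blast
next
  assume "\<exists>a. a \<noteq> 0 \<and> (\<forall>i<M. w i = a * of_real (v i))"
  then obtain a where "a \<noteq> 0" and a: "\<And>i. i < M \<Longrightarrow> w i = a * of_real (v i)" by blast
  have "(\<Sum>j<M. X i j * w j) = of_real r * w i" if "i < M" for i
  proof -
    have "(\<Sum>j<M. X i j * w j) = (\<Sum>j<M. a * of_real (R i j * v j))"
      using that by (intro sum.cong) (simp_all add: X a)
    also have "\<dots> = a * of_real (fmat_vec M R v i)" by (simp add: fmat_vec_def sum_distrib_left)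
    finally have "(\<Sum>j<M. X i j * w j) = a * of_real (fmat_vec M R v i)" .
    then show ?thesis using v[OF that] a[OF that] by simp
  qed
  moreover have "w 0 \<noteq> 0" using a[OF M] pos[OF M] \<open>a \<noteq> 0\<close> by simp
  ultimately show "is_right_eigvec M X (of_real r) w"
    using M unfolding is_right_eigvec_def by blast
qed

lemma positive_left_right_eigvec_same_eigenvalue:
  assumes M: "M > 0" and pos_u: "\<And>i. i < M \<Longrightarrow> 0 < u i" and pos_v: "\<And>i. i < M \<Longrightarrow> 0 < v i"
    and u: "\<And>j. j < M \<Longrightarrow> fmat_vec M (\<lambda>i j. R j i) u j = r' * u j"
    and v: "\<And>i. i < M \<Longrightarrow> fmat_vec M R v i = r * v i"
  shows "r' = r"
proof -
  have "r * (\<Sum>i<M. u i * v i) = (\<Sum>i<M. u i * fmat_vec M R v i)"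
    unfolding sum_distrib_left by (intro sum.cong) (simp_all add: v mult_ac)
  also have "\<dots> = (\<Sum>i<M. \<Sum>j<M. u i * R i j * v j)"
    by (simp add: fmat_vec_def sum_distrib_left mult.assoc)
  also have "\<dots> = (\<Sum>j<M. \<Sum>i<M. u i * R i j * v j)" by (rule sum.swap)
  also have "\<dots> = (\<Sum>j<M. fmat_vec M (\<lambda>i j. R j i) u j * v j)"
    unfolding fmat_vec_def sum_distrib_right by (simp add: mult_ac)
  also have "\<dots> = r' * (\<Sum>i<M. u i * v i)"
    unfolding sum_distrib_left by (intro sum.cong) (simp_all add: u mult_ac)
  finally have "r * (\<Sum>i<M. u i * v i) = r' * (\<Sum>i<M. u i * v i)" .
  moreover have "0 < (\<Sum>i<M. u i * v i)" using M pos_u pos_v by (intro sum_pos) auto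
  ultimately show ?thesis by simp
qed

lemma delta_eq_perron_root:
  assumes M: "M > 0" and "0 \<le> r"
    and X: "\<And>i j. i < M \<Longrightarrow> j < M \<Longrightarrow> X i j = of_real (R i j)"
    and pos: "\<And>i. i < M \<Longrightarrow> 0 < v i" and v: "\<And>i. i < M \<Longrightarrow> fmat_vec M R v i = r * v i"
    and bound: "\<And>lam. is_eigenvalue M X lam \<Longrightarrow> cmod lam \<le> r"
  shows "delta M X = of_real r"
  unfolding delta_def
proof (rule the_equality)
  have "is_eigenvalue M X (of_real r)"
    unfolding is_eigenvalue_def
  proof (intro exI[of _ "\<lambda>i. of_real (v i)"] conjI allI impI)
    show "\<exists>i<M. complex_of_real (v i) \<noteq> 0" using M pos[OF M] by auto
    fix i assume "i < M"
    then have "(\<Sum>j<M. X i j * of_real (v j)) = (\<Sum>j<M. of_real (R i j * v j))"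
      by (intro sum.cong) (simp_all add: X)
    also have "\<dots> = of_real (fmat_vec M R v i)" by (simp add: fmat_vec_def)
    finally have "(\<Sum>j<M. X i j * of_real (v j)) = of_real (fmat_vec M R v i)" .
    then show "(\<Sum>j<M. X i j * of_real (v j)) = of_real r * of_real (v i)"
      using v[OF \<open>i < M\<close>] by simp
  qed
  then show "is_eigenvalue M X (of_real r) \<and>
      (\<forall>m. is_eigenvalue M X m \<longrightarrow> cmod m \<le> cmod (complex_of_real r)) \<and>
      0 \<le> Arg (complex_of_real r) \<and>
      (\<forall>m. is_eigenvalue M X m \<longrightarrow> cmod m = cmod (complex_of_real r) \<longrightarrow> Re m \<le> Re (complex_of_real r))"
    using bound \<open>0 \<le> r\<close> by (auto simp: Arg_of_real complex_Re_le_cmod)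
  fix lam assume lam: "is_eigenvalue M X lam \<and>
      (\<forall>m. is_eigenvalue M X m \<longrightarrow> cmod m \<le> cmod lam) \<and> 0 \<le> Arg lam \<and>
      (\<forall>m. is_eigenvalue M X m \<longrightarrow> cmod m = cmod lam \<longrightarrow> Re m \<le> Re lam)"
  then have "cmod lam \<le> r" "r \<le> cmod lam"
    using bound \<open>is_eigenvalue M X (of_real r)\<close> \<open>0 \<le> r\<close> by force+
  then have "cmod lam = r" by simp
  then have "r \<le> Re lam"
    using lam \<open>is_eigenvalue M X (of_real r)\<close> \<open>0 \<le> r\<close> by force
  then have "Re lam = cmod lam" using complex_Re_le_cmod[of lam] \<open>cmod lam = r\<close> by linarith
  then have "Im lam = 0" using cmod_power2[of lam] by simp
  with \<open>Re lam = cmod lam\<close> \<open>cmod lam = r\<close> show "lam = of_real r" by (simp add: complex_eq_iff)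
qed

theorem perron_frobenius:
  assumes nonneg: "nonneg_mat M R" and irr: "matrix_irreducible M R" and M: "M > 0"
    and X: "\<And>i j. i < M \<Longrightarrow> j < M \<Longrightarrow> X i j = of_real (R i j)"
  obtains u v where "\<And>i. i < M \<Longrightarrow> 0 < u i" "\<And>i. i < M \<Longrightarrow> 0 < v i"
    "\<forall>x. is_left_eigvec M X (delta M X) x \<longleftrightarrow> (\<exists>a. a \<noteq> 0 \<and> (\<forall>i<M. x i = a * of_real (u i)))"
    "\<forall>x. is_right_eigvec M X (delta M X) x \<longleftrightarrow> (\<exists>a. a \<noteq> 0 \<and> (\<forall>i<M. x i = a * of_real (v i)))"
proof -
  obtain r v where "0 \<le> r" and pos_v: "\<And>i. i < M \<Longrightarrow> 0 < v i"
    and v: "\<And>i. i < M \<Longrightarrow> fmat_vec M R v i = r * v i"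
    and bound: "\<And>lam. is_eigenvalue M (\<lambda>i j. of_real (R i j)) lam \<Longrightarrow> cmod lam \<le> r"
    by (rule perron_eigenvector_exists[OF nonneg irr M]) blast
  obtain r' u where "0 \<le> r'" and pos_u: "\<And>i. i < M \<Longrightarrow> 0 < u i"
    and u: "\<And>i. i < M \<Longrightarrow> fmat_vec M (\<lambda>i j. R j i) u i = r' * u i"
    and "\<And>lam. is_eigenvalue M (\<lambda>i j. of_real (R j i)) lam \<Longrightarrow> cmod lam \<le> r'"
    by (rule perron_eigenvector_exists[OF nonneg_mat_transpose[OF nonneg]
        matrix_irreducible_transpose[OF irr] M]) blast
  have "r' = r" by (rule positive_left_right_eigvec_same_eigenvalue[OF M pos_u pos_v u v])
  have delta: "delta M X = of_real r"
    using delta_eq_perron_root[OF M \<open>0 \<le> r\<close> X pos_v v] bound is_eigenvalue_cong[of M X, OF X] by simp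
  show ?thesis
  proof (rule that[OF pos_u pos_v])
    show "\<forall>x. is_left_eigvec M X (delta M X) x \<longleftrightarrow> (\<exists>a. a \<noteq> 0 \<and> (\<forall>i<M. x i = a * of_real (u i)))"
      unfolding is_left_eigvec_iff_transpose delta
      using is_right_eigvec_iff_multiple_of_positive[OF nonneg_mat_transpose[OF nonneg]
          matrix_irreducible_transpose[OF irr] M _ pos_u] u \<open>r' = r\<close> X by simp
    show "\<forall>x. is_right_eigvec M X (delta M X) x \<longleftrightarrow> (\<exists>a. a \<noteq> 0 \<and> (\<forall>i<M. x i = a * of_real (v i)))"
      unfolding delta using is_right_eigvec_iff_multiple_of_positive[OF nonneg irr M X pos_v v] by blast
  qed
qed

definition normalized_left_eigvec ::
    "nat \<Rightarrow> (nat \<Rightarrow> nat \<Rightarrow> complex) \<Rightarrow> (nat \<Rightarrow> complex) \<Rightarrow> (nat \<Rightarrow> complex) \<Rightarrow> bool" where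
  "normalized_left_eigvec M X c u \<longleftrightarrow>
     (\<forall>i\<ge>M. u i = 0) \<and> is_left_eigvec M X (delta M X) u \<and> (\<Sum>i<M. u i * c i) = 1"

definition normalized_right_eigvec ::
    "nat \<Rightarrow> (nat \<Rightarrow> nat \<Rightarrow> complex) \<Rightarrow> (nat \<Rightarrow> complex) \<Rightarrow> (nat \<Rightarrow> complex) \<Rightarrow> bool" where
  "normalized_right_eigvec M X c w \<longleftrightarrow>
     (\<forall>i\<ge>M. w i = 0) \<and> is_right_eigvec M X (delta M X) w \<and> (\<Sum>i<M. c i * w i) = 1"

lemma ex1_normalized_on_line:
  fixes e c :: "nat \<Rightarrow> complex"
  assumes line: "\<And>x. P x \<longleftrightarrow> (\<exists>a. a \<noteq> 0 \<and> (\<forall>i<M. x i = a * e i))"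
    and pairing: "(\<Sum>i<M. e i * c i) \<noteq> 0"
  shows "\<exists>!x. (\<forall>i\<ge>M. x i = 0) \<and> P x \<and> (\<Sum>i<M. x i * c i) = 1"
proof -
  define K where "K = (\<Sum>i<M. e i * c i)"
  have "K \<noteq> 0" using pairing by (simp add: K_def)
  have scaled: "(\<Sum>i<M. a * e i * c i) = a * K" for a
    by (simp add: K_def sum_distrib_left mult.assoc)
  define x0 where "x0 = (\<lambda>i. if i < M then e i / K else 0)"
  show ?thesis
  proof (rule ex1I[of _ x0])
    have "P x0" unfolding line using \<open>K \<noteq> 0\<close>
      by (intro exI[of _ "inverse K"]) (simp add: x0_def field_simps)
    moreover have "(\<Sum>i<M. x0 i * c i) = 1"
      using pairing scaled[of "inverse K"] by (simp add: x0_def K_def field_simps)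
    ultimately show "(\<forall>i\<ge>M. x0 i = 0) \<and> P x0 \<and> (\<Sum>i<M. x0 i * c i) = 1"
      by (simp add: x0_def)
  next
    fix x assume x: "(\<forall>i\<ge>M. x i = 0) \<and> P x \<and> (\<Sum>i<M. x i * c i) = 1"
    then obtain a where a: "\<And>i. i < M \<Longrightarrow> x i = a * e i" using line by blast
    then have "a * K = 1" using x scaled[of a] by simp
    then have "a = inverse K" using \<open>K \<noteq> 0\<close> by (simp add: field_simps)
    with a x show "x = x0" by (auto simp: x0_def field_simps)
  qed
qed

lemma ex1_normalized_left_eigvec_perron:
  assumes "nonneg_mat M R" "matrix_irreducible M R" "M > 0"
    and "\<And>i j. i < M \<Longrightarrow> j < M \<Longrightarrow> X i j = of_real (R i j)"
  shows "\<exists>!u. normalized_left_eigvec M X (\<lambda>_. 1) u"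
proof -
  obtain u v where pos: "\<And>i. i < M \<Longrightarrow> 0 < u i" and "\<And>i. i < M \<Longrightarrow> 0 < v i"
    and line: "\<forall>x. is_left_eigvec M X (delta M X) x \<longleftrightarrow> (\<exists>a. a \<noteq> 0 \<and> (\<forall>i<M. x i = a * of_real (u i)))"
    and "\<forall>x. is_right_eigvec M X (delta M X) x \<longleftrightarrow> (\<exists>a. a \<noteq> 0 \<and> (\<forall>i<M. x i = a * of_real (v i)))"
    using perron_frobenius[OF assms] by blast
  have "0 < (\<Sum>i<M. u i)" using pos \<open>M > 0\<close> by (intro sum_pos) auto
  then have "(\<Sum>i<M. complex_of_real (u i) * 1) \<noteq> 0" by (simp flip: of_real_sum)
  then show ?thesis
    unfolding normalized_left_eigvec_def by (rule ex1_normalized_on_line[OF line[rule_format]])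
qed

lemma ex1_normalized_right_eigvec_perron:
  assumes "nonneg_mat M R" "matrix_irreducible M R" "M > 0"
    and "\<And>i j. i < M \<Longrightarrow> j < M \<Longrightarrow> X i j = of_real (R i j)"
    and c: "is_left_eigvec M X (delta M X) c"
  shows "\<exists>!w. normalized_right_eigvec M X c w"
proof -
  obtain u v where pos_u: "\<And>i. i < M \<Longrightarrow> 0 < u i" and pos_v: "\<And>i. i < M \<Longrightarrow> 0 < v i"
    and left: "\<forall>x. is_left_eigvec M X (delta M X) x \<longleftrightarrow> (\<exists>a. a \<noteq> 0 \<and> (\<forall>i<M. x i = a * of_real (u i)))"
    and right: "\<forall>x. is_right_eigvec M X (delta M X) x \<longleftrightarrow> (\<exists>a. a \<noteq> 0 \<and> (\<forall>i<M. x i = a * of_real (v i)))"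
    using perron_frobenius[OF assms(1-4)] by blast
  obtain a where "a \<noteq> 0" and a: "\<And>i. i < M \<Longrightarrow> c i = a * of_real (u i)" using c left by blast
  define S where "S = (\<Sum>i<M. v i * u i)"
  have "0 < S" unfolding S_def using pos_u pos_v \<open>M > 0\<close> by (intro sum_pos) auto
  moreover have "(\<Sum>i<M. of_real (v i) * c i) = a * of_real S"
    by (simp add: S_def a sum_distrib_left mult_ac)
  ultimately have "(\<Sum>i<M. of_real (v i) * c i) \<noteq> 0" using \<open>a \<noteq> 0\<close> by simp
  from ex1_normalized_on_line[OF right[rule_format] this] show ?thesis
    unfolding normalized_right_eigvec_def by (simp add: mult.commute)
qed

section \<open>Diagonal similarity\<close>

definition diag_similar ::
    "nat \<Rightarrow> (nat \<Rightarrow> complex) \<Rightarrow> (nat \<Rightarrow> nat \<Rightarrow> complex) \<Rightarrow> (nat \<Rightarrow> nat \<Rightarrow> complex) \<Rightarrow> bool" where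
  "diag_similar M d Y X \<longleftrightarrow> (\<forall>i. d i \<noteq> 0) \<and> (\<forall>i<M. \<forall>j<M. Y i j = d i * X i j / d j)"

lemma is_right_eigvec_diag_similar:
  assumes "diag_similar M d Y X"
  shows "is_right_eigvec M Y lam w \<longleftrightarrow> is_right_eigvec M X lam (\<lambda>i. w i / d i)"
proof -
  have d: "\<And>i. d i \<noteq> 0" using assms by (simp add: diag_similar_def)
  have "(\<Sum>j<M. Y i j * w j) = d i * (\<Sum>j<M. X i j * (w j / d j))" if "i < M" for i
    using assms that by (auto simp: diag_similar_def sum_distrib_left intro!: sum.cong)
  then have "(\<Sum>j<M. Y i j * w j) = lam * w i \<longleftrightarrow> (\<Sum>j<M. X i j * (w j / d j)) = lam * (w i / d i)"
    if "i < M" for i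
    using that d[of i] by (auto simp: field_simps)
  then show ?thesis using d unfolding is_right_eigvec_def by auto
qed

lemma is_left_eigvec_diag_similar:
  assumes "diag_similar M d Y X"
  shows "is_left_eigvec M Y lam u \<longleftrightarrow> is_left_eigvec M X lam (\<lambda>i. u i * d i)"
proof -
  have d: "\<And>i. d i \<noteq> 0" using assms by (simp add: diag_similar_def)
  have "(\<Sum>i<M. u i * Y i j) = (\<Sum>i<M. u i * d i * X i j) / d j" if "j < M" for j
    using assms that by (auto simp: diag_similar_def sum_divide_distrib intro!: sum.cong)
  then have "(\<Sum>i<M. u i * Y i j) = lam * u j \<longleftrightarrow> (\<Sum>i<M. u i * d i * X i j) = lam * (u j * d j)"
    if "j < M" for j
    using that d[of j] by (auto simp: field_simps)
  then show ?thesis using d unfolding is_left_eigvec_def by auto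
qed

lemma delta_diag_similar:
  assumes "diag_similar M d Y X"
  shows "delta M Y = delta M X"
proof -
  have d: "\<And>i. d i \<noteq> 0" using assms by (simp add: diag_similar_def)
  have "is_eigenvalue M Y lam \<longleftrightarrow> is_eigenvalue M X lam" for lam
  proof -
    have "(\<exists>w. is_right_eigvec M Y lam w) \<longleftrightarrow> (\<exists>w. is_right_eigvec M X lam w)"
      unfolding is_right_eigvec_diag_similar[OF assms]
    proof
      assume "\<exists>w. is_right_eigvec M X lam w"
      then obtain w where "is_right_eigvec M X lam w" by blast
      show "\<exists>w. is_right_eigvec M X lam (\<lambda>i. w i / d i)"
      proof (intro exI)
        show "is_right_eigvec M X lam (\<lambda>i. w i * d i / d i)"
          using \<open>is_right_eigvec M X lam w\<close> d by simp
      qed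
    qed blast
    then show ?thesis by (simp add: is_eigenvalue_def is_right_eigvec_def)
  qed
  then show ?thesis by (simp add: delta_def)
qed

lemma normalized_left_eigvec_diag_similar:
  assumes "diag_similar M d Y X"
  shows "normalized_left_eigvec M Y c u \<longleftrightarrow> normalized_left_eigvec M X (\<lambda>i. c i / d i) (\<lambda>i. u i * d i)"
proof -
  have d: "\<And>i. d i \<noteq> 0" using assms by (simp add: diag_similar_def)
  have "(\<Sum>i<M. u i * d i * (c i / d i)) = (\<Sum>i<M. u i * c i)"
    by (intro sum.cong) (simp_all add: d)
  then show ?thesis
    by (simp add: normalized_left_eigvec_def is_left_eigvec_diag_similar[OF assms]
        delta_diag_similar[OF assms] d)
qed

lemma normalized_right_eigvec_diag_similar:
  assumes "diag_similar M d Y X"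
  shows "normalized_right_eigvec M Y c w \<longleftrightarrow> normalized_right_eigvec M X (\<lambda>i. c i * d i) (\<lambda>i. w i / d i)"
proof -
  have d: "\<And>i. d i \<noteq> 0" using assms by (simp add: diag_similar_def)
  have "(\<Sum>i<M. c i * d i * (w i / d i)) = (\<Sum>i<M. c i * w i)"
    by (intro sum.cong) (simp_all add: d)
  then show ?thesis
    by (simp add: normalized_right_eigvec_def is_right_eigvec_diag_similar[OF assms]
        delta_diag_similar[OF assms] d)
qed

lemma the_bij_transfer:
  assumes "\<exists>!x. P x" and "\<And>x. Q x \<longleftrightarrow> P (g x)" and "\<And>x. g (h x) = x" and "\<And>x. h (g x) = x"
  shows "(THE x. Q x) = h (THE x. P x)"
proof (rule the_equality)
  show "Q (h (THE x. P x))" using assms theI'[OF assms(1)] by simp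
  show "x = h (THE x. P x)" if "Q x" for x
    using assms that the1_equality[OF assms(1)] by metis
qed

lemma the_normalized_left_eigvec_diag_similar:
  assumes sim: "diag_similar M d Y X" and "\<exists>!u. normalized_left_eigvec M X (\<lambda>i. c i / d i) u"
  shows "(THE u. normalized_left_eigvec M Y c u)
    = (\<lambda>i. (THE u. normalized_left_eigvec M X (\<lambda>i. c i / d i) u) i / d i)"
  using sim
  by (intro the_bij_transfer[where g="\<lambda>u i. u i * d i" and h="\<lambda>u i. u i / d i",
        OF assms(2) normalized_left_eigvec_diag_similar[OF sim]])
    (auto simp: diag_similar_def)

lemma the_normalized_right_eigvec_diag_similar:
  assumes sim: "diag_similar M d Y X" and "\<exists>!w. normalized_right_eigvec M X (\<lambda>i. c i * d i) w"
  shows "(THE w. normalized_right_eigvec M Y c w)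
    = (\<lambda>i. d i * (THE w. normalized_right_eigvec M X (\<lambda>i. c i * d i) w) i)"
  using sim
  by (intro the_bij_transfer[where g="\<lambda>w i. w i / d i" and h="\<lambda>w i. d i * w i",
        OF assms(2) normalized_right_eigvec_diag_similar[OF sim]])
    (auto simp: diag_similar_def)

section \<open>Rotating the argument of \<open>\<Gamma>\<^sub>A\<^sup>*\<close> by a \<open>\<tau>\<close>-th root of unity\<close>

lemma omega_pow_period:
  assumes "0 < tau"
  shows "(omega tau ^ n) ^ tau = 1"
proof -
  have "omega tau ^ tau = exp (of_nat tau * (2 * of_real pi * \<i> / of_nat tau))"
    unfolding omega_def by (rule exp_of_nat_mult[symmetric])
  also have "\<dots> = 1" using assms by simp
  finally show ?thesis by (metis power_mult mult.commute power_one)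
qed

lemma norm_omega_pow: "cmod (omega tau ^ n) = 1"
  by (simp add: omega_def norm_power)

lemma power_eq_if_mod_eq:
  fixes w :: "'a::monoid_mult"
  assumes "w ^ tau = 1" "a mod tau = b mod tau"
  shows "w ^ a = w ^ b"
proof -
  have pow: "w ^ n = w ^ (n mod tau)" for n
  proof -
    have "w ^ n = (w ^ tau) ^ (n div tau) * w ^ (n mod tau)"
      by (simp flip: power_mult power_add)
    then show ?thesis using assms(1) by simp
  qed
  show ?thesis by (simp only: pow[of a] pow[of b] assms(2))
qed

lemma shifted_mod_eq:
  fixes k q p tau :: nat
  assumes "(int k - 1) mod int tau = (int p - int q) mod int tau"
  shows "(k + q) mod tau = (1 + p) mod tau"
proof -
  have "int tau dvd (int k - 1) - (int p - int q)" using assms by (simp add: mod_eq_dvd_iff)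
  then have "int tau dvd int (k + q) - int (1 + p)" by (simp add: algebra_simps)
  then have "int ((k + q) mod tau) = int ((1 + p) mod tau)" by (simp add: mod_eq_dvd_iff of_nat_mod)
  then show ?thesis by simp
qed

text \<open>Only the powers \<open>k \<equiv> 1 + p(j) - p(i) (mod \<tau>)\<close> occur in entry \<open>(i,j)\<close>, and on them \<open>w\<^sup>k\<close> is
  the constant \<open>w\<^bsup>1 + p(j) - p(i)\<^esup>\<close>.\<close>
lemma GammaA_rotation:
  fixes A :: "nat \<Rightarrow> nat \<Rightarrow> nat \<Rightarrow> real" and w :: complex
  assumes "0 < tau" and w: "w ^ tau = 1" and "0 < y"
    and nonneg: "\<And>k. 0 \<le> A k i j"
    and period: "\<And>k. k \<ge> -1 \<Longrightarrow> A (nat (k + 1)) i j > 0 \<Longrightarrow>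
        k mod int tau = (int (p j) - int (p i)) mod int tau"
    and summable: "summable (\<lambda>k. A k i j * y ^ k)"
  shows "GammaA A (of_real y * w) i j = DeltaM p w i * GammaA A (of_real y) i j / DeltaM p w j"
proof -
  have "w \<noteq> 0" using w \<open>0 < tau\<close> by (auto simp: power_0_left)
  define c where "c = w * w ^ p j / w ^ p i"
  define f where "f = (\<lambda>k. complex_of_real y ^ k * of_real (A k i j))"
  have power_term: "(of_real y * w) ^ k * of_real (A k i j) = f k * c" for k
  proof (cases "A k i j = 0")
    case False
    then have "A (nat ((int k - 1) + 1)) i j > 0" using nonneg[of k] by simp
    then have "(k + p i) mod tau = (1 + p j) mod tau"
      using period[of "int k - 1"] by (intro shifted_mod_eq) simp
    then have "w ^ (k + p i) = w ^ (1 + p j)" by (rule power_eq_if_mod_eq[OF w])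
    then have "w ^ k * w ^ p i = w * w ^ p j" by (simp add: power_add)
    then have "w ^ k = c" using \<open>w \<noteq> 0\<close> by (simp add: c_def nonzero_eq_divide_eq)
    then show ?thesis by (simp add: f_def power_mult_distrib mult_ac)
  qed (simp add: f_def)
  have "summable f"
    using summable_complex_of_real[THEN iffD2, OF summable] by (simp add: f_def mult_ac)
  then have "GammaA A (of_real y * w) i j = suminf f * c / (of_real y * w)"
    unfolding GammaA_def power_term by (simp add: suminf_mult2)
  also have "\<dots> = DeltaM p w i * (suminf f / of_real y) / DeltaM p w j"
    using \<open>w \<noteq> 0\<close> \<open>0 < y\<close> by (simp add: c_def DeltaM_def field_simps)
  finally show ?thesis by (simp add: GammaA_def f_def)
qed

lemma summable_of_lt_rA:
  assumes "i < M" "j < M" and "ereal \<bar>y\<bar> < rA M A"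
  shows "summable (\<lambda>k. A k i j * y ^ k)"
proof -
  have "rA M A \<le> conv_radius (\<lambda>k. A k i j)"
    unfolding rA_def using assms by (intro INF_lower2[of "(i, j)"]) auto
  with assms(3) show ?thesis by (intro summable_in_conv_radius) simp
qed

lemma GammaA_diag_similar:
  assumes nonneg: "\<And>k i j. i < M \<Longrightarrow> j < M \<Longrightarrow> 0 \<le> A k i j"
    and period: "\<And>k i j. i < M \<Longrightarrow> j < M \<Longrightarrow> k \<ge> -1 \<Longrightarrow> A (nat (k + 1)) i j > 0 \<Longrightarrow>
        k mod int tau = (int (p j) - int (p i)) mod int tau"
    and "0 < tau" "w ^ tau = 1" "0 < y" "ereal y < rA M A"
  shows "diag_similar M (DeltaM p w) (GammaA A (of_real y * w)) (GammaA A (of_real y))"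
proof -
  have "w \<noteq> 0" using assms(4) \<open>0 < tau\<close> by (auto simp: power_0_left)
  then have "DeltaM p w i \<noteq> 0" for i by (simp add: DeltaM_def)
  moreover have "GammaA A (of_real y * w) i j = DeltaM p w i * GammaA A (of_real y) i j / DeltaM p w j"
    if "i < M" "j < M" for i j
  proof (rule GammaA_rotation[OF assms(3-5)])
    show "summable (\<lambda>k. A k i j * y ^ k)"
      using summable_of_lt_rA[OF that, of y A] assms(5,6) by simp
  qed (use nonneg period that in auto)
  ultimately show ?thesis unfolding diag_similar_def by blast
qed

lemma GammaA_of_real_nonneg_irreducible:
  assumes nonneg: "\<And>k i j. i < M \<Longrightarrow> j < M \<Longrightarrow> 0 \<le> A k i j"
    and irr: "matrix_irreducible M (Asum A)" and "0 < y" "ereal y < rA M A"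
  obtains R where "nonneg_mat M R" "matrix_irreducible M R"
    "\<And>i j. i < M \<Longrightarrow> j < M \<Longrightarrow> GammaA A (of_real y) i j = of_real (R i j)"
proof
  define R where "R = (\<lambda>i j. (\<Sum>k. y ^ k * A k i j) / y)"
  have summable: "summable (\<lambda>k. y ^ k * A k i j)" if "i < M" "j < M" for i j
    using summable_of_lt_rA[OF that] assms by (simp add: mult.commute)
  show "GammaA A (of_real y) i j = of_real (R i j)" if "i < M" "j < M" for i j
  proof -
    have "of_real (\<Sum>k. y ^ k * A k i j) = (\<Sum>k. complex_of_real y ^ k * of_real (A k i j))"
      using suminf_of_real[OF summable[OF that]] by simp
    then show ?thesis by (simp add: GammaA_def R_def)
  qed
  show "nonneg_mat M R"
    unfolding nonneg_mat_def R_def using nonneg summable \<open>0 < y\<close>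
    by (auto intro!: divide_nonneg_pos suminf_nonneg)
  have support: "support_rel M R a b" if edge: "support_rel M (Asum A) a b" for a b
  proof -
    have "\<exists>k. 0 < A k a b"
    proof (rule ccontr)
      assume no_pos: "\<nexists>k. 0 < A k a b"
      have "A k a b = 0" for k
        using no_pos nonneg[of a b k] edge by (auto simp: not_less intro: order.antisym)
      then have "Asum A a b = 0" by (simp add: Asum_def)
      with edge show False by simp
    qed
    then obtain k where "0 < A k a b" by blast
    then have "0 < (\<Sum>k. y ^ k * A k a b)"
      using edge nonneg \<open>0 < y\<close> by (intro suminf_pos2[where i=k, OF summable]) auto
    with edge \<open>0 < y\<close> show ?thesis by (simp add: R_def)
  qed
  show "matrix_irreducible M R"
    unfolding matrix_irreducible_def
  proof (intro allI impI)
    fix i j assume "i < M" "j < M"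
    then have "(support_rel M (Asum A))\<^sup>*\<^sup>* i j" using irr by (simp add: matrix_irreducible_def)
    then show "(support_rel M R)\<^sup>*\<^sup>* i j"
      by (rule rtranclp_mono[THEN predicate2D, rotated]) (use support in auto)
  qed
qed

lemma mu_eq_THE:
  "mu M A p z = (THE u. normalized_left_eigvec M (GammaA A z) (DeltaM p (z / of_real (cmod z))) u)"
  by (simp add: mu_def normalized_left_eigvec_def)

lemma vv_eq_THE: "vv M A p z = (THE w. normalized_right_eigvec M (GammaA A z) (mu M A p z) w)"
  by (simp add: vv_def normalized_right_eigvec_def)

lemma mu_of_real:
  assumes "0 < y"
  shows "mu M A p (of_real y) = (THE u. normalized_left_eigvec M (GammaA A (of_real y)) (\<lambda>_. 1) u)"
proof -
  have "DeltaM p 1 = (\<lambda>_. 1)" by (simp add: DeltaM_def fun_eq_iff)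
  with assms show ?thesis by (simp add: mu_eq_THE)
qed

lemma mu_rotation:
  assumes "0 < y" and "cmod w = 1"
    and sim: "diag_similar M (DeltaM p w) (GammaA A (of_real y * w)) (GammaA A (of_real y))"
    and ex1: "\<exists>!u. normalized_left_eigvec M (GammaA A (of_real y)) (\<lambda>_. 1) u"
  shows "mu M A p (of_real y * w) = (\<lambda>i. mu M A p (of_real y) i / DeltaM p w i)"
proof -
  have "of_real y * w / of_real (cmod (of_real y * w)) = w"
    using assms(1,2) by (simp add: norm_mult)
  moreover have "w \<noteq> 0" using \<open>cmod w = 1\<close> by auto
  then have "(\<lambda>i. DeltaM p w i / DeltaM p w i) = (\<lambda>_. 1)" by (simp add: DeltaM_def fun_eq_iff)
  ultimately show ?thesis
    unfolding mu_eq_THE[of M A p "of_real y * w"] mu_of_real[OF \<open>0 < y\<close>]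
    using the_normalized_left_eigvec_diag_similar[OF sim, of "DeltaM p w"] ex1 by simp
qed

lemma vv_rotation:
  assumes sim: "diag_similar M d (GammaA A z) (GammaA A z0)"
    and mu: "mu M A p z = (\<lambda>i. mu M A p z0 i / d i)"
    and ex1: "\<exists>!v. normalized_right_eigvec M (GammaA A z0) (mu M A p z0) v"
  shows "vv M A p z = (\<lambda>i. d i * vv M A p z0 i)"
proof -
  have "(\<lambda>i. mu M A p z i * d i) = mu M A p z0"
    using sim by (auto simp: mu diag_similar_def)
  then show ?thesis
    using the_normalized_right_eigvec_diag_similar[OF sim] ex1 by (simp add: vv_eq_THE)
qed

theorem proposition2p10:
  fixes M0 M :: nat
    and A B :: "nat \<Rightarrow> nat \<Rightarrow> nat \<Rightarrow> real"
    and C0 :: "nat \<Rightarrow> nat \<Rightarrow> real"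
    and p :: "nat \<Rightarrow> nat"
    and y :: real and \<nu> :: nat
  assumes M0_pos: "M0 > 0" and M_pos: "M > 0"
    and A_nonneg: "\<And>k i j. i < M \<Longrightarrow> j < M \<Longrightarrow> A k i j \<ge> 0"
    and B0_nonneg: "\<And>i j. i < M0 \<Longrightarrow> j < M0 \<Longrightarrow> B 0 i j \<ge> 0"
    and B_nonneg: "\<And>k i j. k \<ge> 1 \<Longrightarrow> i < M0 \<Longrightarrow> j < M \<Longrightarrow> B k i j \<ge> 0"
    and C0_nonneg: "\<And>i j. i < M \<Longrightarrow> j < M0 \<Longrightarrow> C0 i j \<ge> 0"
    and A_summable: "\<And>i j. i < M \<Longrightarrow> j < M \<Longrightarrow> summable (\<lambda>k. A k i j)"
    and A_stoch: "\<And>i. i < M \<Longrightarrow> (\<Sum>j<M. Asum A i j) = 1"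
    and B_stoch: "\<And>i. i < M0 \<Longrightarrow>
        (\<lambda>k. \<Sum>j<M. B (Suc k) i j) sums (1 - (\<Sum>j<M0. B 0 i j))"
    and C_stoch: "\<And>i. i < M \<Longrightarrow>
        (\<lambda>k. \<Sum>j<M. A (Suc k) i j) sums (1 - (\<Sum>j<M0. C0 i j))"
    and T_irr: "T_irreducible M0 M A B C0"
    and A_irr: "matrix_irreducible M (Asum A)"
    and p_range: "\<And>i. i < M \<Longrightarrow> p i < MAP_period M A"
    and p_cong: "\<And>k i j. i < M \<Longrightarrow> j < M \<Longrightarrow> k \<ge> -1 \<Longrightarrow> A (nat (k + 1)) i j > 0 \<Longrightarrow>
        k mod int (MAP_period M A) = (int (p j) - int (p i)) mod int (MAP_period M A)"
    and y_pos: "0 < y" and y_lt: "ereal y < rA M A"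
    and nu_lt: "\<nu> < MAP_period M A"
  shows "delta M (GammaA A (of_real y * omega (MAP_period M A) ^ \<nu>))
           = delta M (GammaA A (of_real y))
       \<and> (\<forall>i. mu M A p (of_real y * omega (MAP_period M A) ^ \<nu>) i
              = mu M A p (of_real y) i * inverse (DeltaM p (omega (MAP_period M A) ^ \<nu>) i))
       \<and> (\<forall>i. vv M A p (of_real y * omega (MAP_period M A) ^ \<nu>) i
              = DeltaM p (omega (MAP_period M A) ^ \<nu>) i * vv M A p (of_real y) i)"
proof -
  define w where "w = omega (MAP_period M A) ^ \<nu>"
  have "0 < MAP_period M A" using nu_lt by simp
  then have "w ^ MAP_period M A = 1" by (simp add: w_def omega_pow_period)
  have "cmod w = 1" by (simp add: w_def norm_omega_pow)
  obtain R where R: "nonneg_mat M R" "matrix_irreducible M R"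
    "\<And>i j. i < M \<Longrightarrow> j < M \<Longrightarrow> GammaA A (of_real y) i j = of_real (R i j)"
    using GammaA_of_real_nonneg_irreducible[OF A_nonneg A_irr y_pos y_lt] by blast
  have sim: "diag_similar M (DeltaM p w) (GammaA A (of_real y * w)) (GammaA A (of_real y))"
    by (rule GammaA_diag_similar[OF A_nonneg p_cong \<open>0 < MAP_period M A\<close>
          \<open>w ^ MAP_period M A = 1\<close> y_pos y_lt])
  have ex1_mu: "\<exists>!u. normalized_left_eigvec M (GammaA A (of_real y)) (\<lambda>_. 1) u"
    by (rule ex1_normalized_left_eigvec_perron[OF R(1,2) M_pos R(3)])
  have mu: "mu M A p (of_real y * w) = (\<lambda>i. mu M A p (of_real y) i / DeltaM p w i)"
    by (rule mu_rotation[OF y_pos \<open>cmod w = 1\<close> sim ex1_mu])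
  have mu_left: "is_left_eigvec M (GammaA A (of_real y)) (delta M (GammaA A (of_real y)))
      (mu M A p (of_real y))"
    using theI'[OF ex1_mu] by (simp add: mu_of_real[OF y_pos] normalized_left_eigvec_def)
  have "\<exists>!v. normalized_right_eigvec M (GammaA A (of_real y)) (mu M A p (of_real y)) v"
    by (rule ex1_normalized_right_eigvec_perron[OF R(1,2) M_pos _ mu_left]) (simp add: R(3))
  then have "vv M A p (of_real y * w) = (\<lambda>i. DeltaM p w i * vv M A p (of_real y) i)"
    by (rule vv_rotation[OF sim mu])
  then show ?thesis
    using delta_diag_similar[OF sim] mu by (simp add: w_def divide_inverse)
qed

end
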